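(* Let $\lambda>0$. For any $\alpha_1,\alpha_2>0$ there exists $\alpha_3=\alpha_3(\alpha_1,\alpha_2)>0$ such that, for every $n$, $\rho(u)\le\alpha_3$ for all $u\in X_0(\Omega)$ with $I_{n,\lambda}(u)\le\alpha_1$ and $\|u\|_{p_n}\le\alpha_2$.
   Context: Let $N\ge3$, $s\in(0,1)$ with $s>\frac12$ if $N=3$, $2^*=\frac{2N}{N-2}$, and $p\in(2+\frac{4s}{N-2},2^* )$ if $N>6-4s$, $p\in(2^*-1,2^* )$ if $N\le6-4s$. $\Omega\subset\mathbb{R}^N$ bounded open with $C^{1,\alpha}$ boundary; $X_0(\Omega)=\{u\in H^1(\mathbb{R}^N):u|_\Omega\in H^1_0(\Omega),\ u=0\text{ a.e. outside }\Omega\}$ with norm $\rho(u)=(\|\nabla u\|_2^2+[u]_s^2)^{1/2}$, $[u]_s^2=\iint\frac{|u(x)-u(y)|^2}{|x-y|^{N+2s}}$. $p_n\in(p,2^* )$ with $p_n\to2^*$. $I_{n,\lambda}(u)=\frac12\rho(u)^2-\frac\lambda p\|u\|_p^p-\frac1{p_n}\|u\|_{p_n}^{p_n}$; $\|\cdot\|_q$ denotes the $L^q$ norm. *)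

theory Defs
  imports "HOL-Analysis.Analysis"
begin

fun dder :: "'a::euclidean_space list \<Rightarrow> ('a \<Rightarrow> real) \<Rightarrow> 'a \<Rightarrow> real" where
  "dder [] f = f"
| "dder (v # vs) f = (\<lambda>x. frechet_derivative (dder vs f) (at x) v)"

definition smooth_fun :: "('a::euclidean_space \<Rightarrow> real) \<Rightarrow> bool" where
  "smooth_fun f \<longleftrightarrow> (\<forall>vs x. dder vs f differentiable (at x))"

definition test_fun :: "'a::euclidean_space set \<Rightarrow> ('a \<Rightarrow> real) \<Rightarrow> bool" where
  "test_fun U \<phi> \<longleftrightarrow> smooth_fun \<phi> \<and> compact (closure {x. \<phi> x \<noteq> 0})
      \<and> closure {x. \<phi> x \<noteq> 0} \<subseteq> U"

definition grad :: "('a::euclidean_space \<Rightarrow> real) \<Rightarrow> 'a \<Rightarrow> 'a" where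
  "grad \<phi> x = (\<Sum>i\<in>Basis. frechet_derivative \<phi> (at x) i *\<^sub>R i)"

definition weak_grad_on :: "'a::euclidean_space set \<Rightarrow> ('a \<Rightarrow> real) \<Rightarrow> ('a \<Rightarrow> 'a) \<Rightarrow> bool" where
  "weak_grad_on U u g \<longleftrightarrow>
     (\<lambda>x. indicator U x * u x) \<in> borel_measurable lebesgue \<and>
     (\<lambda>x. indicator U x *\<^sub>R g x) \<in> borel_measurable lebesgue \<and>
     (\<forall>\<phi>. test_fun U \<phi> \<longrightarrow> (\<forall>i\<in>Basis.
        set_integrable lebesgue U (\<lambda>x. u x * frechet_derivative \<phi> (at x) i) \<and>
        set_integrable lebesgue U (\<lambda>x. (g x \<bullet> i) * \<phi> x) \<and>
        (LINT x:U|lebesgue. u x * frechet_derivative \<phi> (at x) i)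
          = - (LINT x:U|lebesgue. (g x \<bullet> i) * \<phi> x)))"

definition H1_on :: "'a::euclidean_space set \<Rightarrow> ('a \<Rightarrow> real) \<Rightarrow> bool" where
  "H1_on U u \<longleftrightarrow> (\<exists>g. weak_grad_on U u g \<and>
     (\<integral>\<^sup>+x\<in>U. ennreal ((u x)\<^sup>2) \<partial>lebesgue) < \<infinity> \<and>
     (\<integral>\<^sup>+x\<in>U. ennreal ((norm (g x))\<^sup>2) \<partial>lebesgue) < \<infinity>)"

definition H10_on :: "'a::euclidean_space set \<Rightarrow> ('a \<Rightarrow> real) \<Rightarrow> bool" where
  "H10_on U u \<longleftrightarrow> H1_on U u \<and> (\<exists>g \<phi>. weak_grad_on U u g \<and> (\<forall>k::nat. test_fun U (\<phi> k)) \<and>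
     ((\<lambda>k. (\<integral>\<^sup>+x\<in>U. ennreal ((\<phi> k x - u x)\<^sup>2) \<partial>lebesgue)
          + (\<integral>\<^sup>+x\<in>U. ennreal ((norm (grad (\<phi> k) x - g x))\<^sup>2) \<partial>lebesgue)) \<longlonglongrightarrow> 0))"

definition X0 :: "'a::euclidean_space set \<Rightarrow> ('a \<Rightarrow> real) \<Rightarrow> bool" where
  "X0 \<Omega> u \<longleftrightarrow> H1_on UNIV u \<and> H10_on \<Omega> u \<and> (AE x in lebesgue. x \<notin> \<Omega> \<longrightarrow> u x = 0)"

text \<open>C^{1,alpha} boundary: locally the region above the graph of a C^{1,alpha} function
  of the variables orthogonal to a unit direction nu.\<close>
definition C1alpha_boundary :: "real \<Rightarrow> 'a::euclidean_space set \<Rightarrow> bool" where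
  "C1alpha_boundary \<alpha> \<Omega> \<longleftrightarrow> 0 < \<alpha> \<and> \<alpha> \<le> 1 \<and>
    (\<forall>x0\<in>frontier \<Omega>. \<exists>r>0. \<exists>\<nu> (\<gamma>::'a \<Rightarrow> real). norm \<nu> = 1 \<and>
       (\<forall>x. \<gamma> x = \<gamma> (x - (x \<bullet> \<nu>) *\<^sub>R \<nu>)) \<and>
       (\<forall>x. \<gamma> differentiable (at x)) \<and>
       (\<exists>C. \<forall>x y. onorm (\<lambda>v. frechet_derivative \<gamma> (at x) v - frechet_derivative \<gamma> (at y) v)
                 \<le> C * dist x y powr \<alpha>) \<and>
       \<Omega> \<inter> ball x0 r = {x \<in> ball x0 r. x \<bullet> \<nu> > \<gamma> x})"

definition enn_powr :: "ennreal \<Rightarrow> real \<Rightarrow> ennreal" where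
  "enn_powr x a = (if x = \<infinity> then \<infinity> else ennreal (enn2real x powr a))"

definition Lpow :: "real \<Rightarrow> ('a::euclidean_space \<Rightarrow> real) \<Rightarrow> ennreal" where
  "Lpow q u = (\<integral>\<^sup>+x. ennreal (\<bar>u x\<bar> powr q) \<partial>lebesgue)"

definition Lnorm :: "real \<Rightarrow> ('a::euclidean_space \<Rightarrow> real) \<Rightarrow> ennreal" where
  "Lnorm q u = enn_powr (Lpow q u) (1 / q)"

definition gagliardo_sq :: "real \<Rightarrow> ('a::euclidean_space \<Rightarrow> real) \<Rightarrow> ennreal" where
  "gagliardo_sq s u = (\<integral>\<^sup>+z. ennreal ((u (fst z) - u (snd z))\<^sup>2
       / norm (fst z - snd z) powr (real DIM('a) + 2 * s)) \<partial>lebesgue)"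

text \<open>rho(u)^2, with g the weak gradient of u.\<close>
definition rho_sq :: "real \<Rightarrow> ('a::euclidean_space \<Rightarrow> real) \<Rightarrow> ('a \<Rightarrow> 'a) \<Rightarrow> ennreal" where
  "rho_sq s u g = (\<integral>\<^sup>+x. ennreal ((norm (g x))\<^sup>2) \<partial>lebesgue) + gagliardo_sq s u"

definition rho :: "real \<Rightarrow> ('a::euclidean_space \<Rightarrow> real) \<Rightarrow> ('a \<Rightarrow> 'a) \<Rightarrow> ennreal" where
  "rho s u g = enn_powr (rho_sq s u g) (1/2)"

definition I_fun :: "real \<Rightarrow> real \<Rightarrow> real \<Rightarrow> real \<Rightarrow> ('a::euclidean_space \<Rightarrow> real) \<Rightarrow> ('a \<Rightarrow> 'a) \<Rightarrow> ereal" where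
  "I_fun s p pn lam u g = enn2ereal (ennreal (1/2) * rho_sq s u g)
       - ereal (lam / p) * enn2ereal (Lpow p u)
       - ereal (1 / pn) * enn2ereal (Lpow pn u)"

definition crit_exp :: "nat \<Rightarrow> real" where
  "crit_exp N = 2 * real N / (real N - 2)"

end

theory Submission
  imports Defs
begin

text \<open>The bound \<open>\<parallel>u\<parallel>_{p_n} \<le> \<alpha>2\<close> gives \<open>\<parallel>u\<parallel>_{p_n}^{p_n} \<le> max 1 \<alpha>2 ^ 2*\<close> uniformly in n.
  Since u vanishes outside the bounded set \<Omega> and \<open>t^p \<le> 1 + t^{p_n}\<close>, also
  \<open>\<parallel>u\<parallel>_p^p \<le> |\<Omega>| + \<parallel>u\<parallel>_{p_n}^{p_n}\<close>. Then \<open>I_{n,\<lambda>}(u) \<le> \<alpha>1\<close> gives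
  \<open>\<rho>(u)^2 \<le> 2 (\<alpha>1 + \<lambda>/p \<parallel>u\<parallel>_p^p + \<parallel>u\<parallel>_{p_n}^{p_n} / p_n)\<close>, bounded independently of n
  and u.\<close>

lemma crit_exp_gt_two: "N \<ge> 3 \<Longrightarrow> crit_exp N > 2"
  unfolding crit_exp_def by (simp add: field_simps)

lemma powr_le_one_plus_powr:
  fixes t p q :: real
  assumes "0 \<le> t" "0 \<le> p" "p \<le> q"
  shows "t powr p \<le> 1 + t powr q"
proof (cases "t \<le> 1")
  case True
  then have "t powr p \<le> 1"
    using assms powr_mono2[of p t 1] by simp
  then show ?thesis by (smt (verit) powr_ge_zero)
next
  case False
  then have "t powr p \<le> t powr q" using assms by (intro powr_mono) auto
  then show ?thesis by simp
qed

lemma Lpow_le_measure_plus_Lpow: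
  assumes u: "u \<in> borel_measurable lebesgue" and S: "S \<in> sets lebesgue"
    and supp: "AE x in lebesgue. x \<notin> S \<longrightarrow> u x = 0"
    and pq: "0 \<le> p" "p \<le> q"
  shows "Lpow p u \<le> emeasure lebesgue S + Lpow q u"
proof -
  have "Lpow p u \<le> (\<integral>\<^sup>+x. indicator S x + ennreal (\<bar>u x\<bar> powr q) \<partial>lebesgue)"
    unfolding Lpow_def
  proof (rule nn_integral_mono_AE)
    show "AE x in lebesgue. ennreal (\<bar>u x\<bar> powr p) \<le> indicator S x + ennreal (\<bar>u x\<bar> powr q)"
      using supp
    proof eventually_elim
      case (elim x)
      show ?case
      proof (cases "x \<in> S")
        case True
        have "ennreal (\<bar>u x\<bar> powr p) \<le> ennreal (1 + \<bar>u x\<bar> powr q)"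
          using pq by (intro ennreal_leI powr_le_one_plus_powr) auto
        then show ?thesis using True by (simp add: ennreal_plus)
      qed (use elim in simp)
    qed
  qed
  also have "\<dots> = emeasure lebesgue S + Lpow q u"
    unfolding Lpow_def using S u by (subst nn_integral_add) auto
  finally show ?thesis .
qed

lemma Lpow_le_of_Lnorm_le:
  assumes "0 < q" "0 \<le> a" "Lnorm q u \<le> ennreal a"
  shows "Lpow q u \<le> ennreal (a powr q)"
proof -
  have finite: "Lpow q u \<noteq> \<infinity>"
    using assms(3) unfolding Lnorm_def enn_powr_def by (auto simp: top_unique)
  define B where "B = enn2real (Lpow q u)"
  have "B \<ge> 0" unfolding B_def by simp
  have "B powr (1/q) \<le> a"
    using assms(2,3) finite unfolding Lnorm_def enn_powr_def B_def by simp
  then have "B \<le> a powr q"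
    using \<open>B \<ge> 0\<close> \<open>0 < q\<close> powr_mono2[of q "B powr (1/q)" a] by (simp add: powr_powr)
  moreover have "Lpow q u = ennreal B"
    using finite unfolding B_def by (simp add: ennreal_enn2real_if)
  ultimately show ?thesis by (simp add: ennreal_leI)
qed

lemma rho_sq_le_of_I_fun_le:
  assumes I: "I_fun s p q lam u g \<le> ereal a"
    and A: "0 \<le> A" "Lpow p u \<le> ennreal A" and B: "0 \<le> B" "Lpow q u \<le> ennreal B"
    and exps: "0 \<le> lam" "0 < p" "0 < q"
  shows "rho_sq s u g \<le> ennreal (2 * (a + lam / p * A + B / q))"
proof -
  define A' where "A' = enn2real (Lpow p u)"
  define B' where "B' = enn2real (Lpow q u)"
  have LpA': "Lpow p u = ennreal A'" and "A' \<le> A"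
    using A unfolding A'_def by (auto simp: top_unique ennreal_enn2real_if enn2real_leI)
  have LqB': "Lpow q u = ennreal B'" and "B' \<le> B"
    using B unfolding B'_def by (auto simp: top_unique ennreal_enn2real_if enn2real_leI)
  have "A' \<ge> 0" "B' \<ge> 0" unfolding A'_def B'_def by simp_all
  have finite: "rho_sq s u g \<noteq> \<infinity>"
  proof
    assume "rho_sq s u g = \<infinity>"
    then have "I_fun s p q lam u g = \<infinity>"
      unfolding I_fun_def using LpA' LqB' by (simp add: ennreal_mult_top)
    then show False using I by simp
  qed
  define R where "R = enn2real (rho_sq s u g)"
  have "R \<ge> 0" unfolding R_def by simp
  have rho_R: "rho_sq s u g = ennreal R"
    unfolding R_def using finite by (simp add: ennreal_enn2real_if)
  have "ennreal (1/2) * ennreal R = ennreal (1/2 * R)"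
    using \<open>R \<ge> 0\<close> by (rule ennreal_mult[symmetric, rotated]) simp
  then have "I_fun s p q lam u g = ereal (R/2 - lam / p * A' - B' / q)"
    unfolding I_fun_def using LpA' LqB' rho_R \<open>A' \<ge> 0\<close> \<open>B' \<ge> 0\<close> \<open>R \<ge> 0\<close>
    by (simp add: enn2ereal_ennreal)
  with I have "R/2 \<le> a + lam / p * A' + B' / q" by simp
  also have "\<dots> \<le> a + lam / p * A + B / q"
    using \<open>A' \<le> A\<close> \<open>B' \<le> B\<close> exps
    by (intro add_mono mult_left_mono divide_right_mono order_refl) auto
  finally have "R \<le> 2 * (a + lam / p * A + B / q)"
    by (simp add: divide_le_eq_numeral1 mult.commute)
  then show ?thesis unfolding rho_R by (rule ennreal_leI)
qed

lemma rho_sq_le_of_I_fun_le_of_Lnorm_le: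
  assumes S: "S \<in> lmeasurable" and u: "u \<in> borel_measurable lebesgue"
    and supp: "AE x in lebesgue. x \<notin> S \<longrightarrow> u x = 0"
    and I: "I_fun s p q lam u g \<le> ereal a" and L: "Lnorm q u \<le> ennreal b"
    and exps: "0 \<le> lam" "0 < p" "p \<le> q" "q \<le> Q" and "0 \<le> b"
  defines "C \<equiv> max 1 b powr Q"
  shows "rho_sq s u g \<le> ennreal (2 * (a + lam / p * (measure lebesgue S + C) + C / p))"
proof -
  have "C \<ge> 0" unfolding C_def by simp
  have "b powr q \<le> max 1 b powr q"
    using \<open>0 \<le> b\<close> \<open>0 < p\<close> \<open>p \<le> q\<close> by (intro powr_mono2) auto
  also have "\<dots> \<le> C"
    unfolding C_def using \<open>q \<le> Q\<close> by (intro powr_mono) auto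
  finally have "ennreal (b powr q) \<le> ennreal C" by (rule ennreal_leI)
  with Lpow_le_of_Lnorm_le[OF _ _ L] have Lq: "Lpow q u \<le> ennreal C"
    using \<open>0 \<le> b\<close> \<open>0 < p\<close> \<open>p \<le> q\<close> by force
  have "Lpow p u \<le> emeasure lebesgue S + Lpow q u"
    using S u supp \<open>0 < p\<close> \<open>p \<le> q\<close> by (intro Lpow_le_measure_plus_Lpow) auto
  also have "\<dots> \<le> ennreal (measure lebesgue S + C)"
    using Lq S \<open>C \<ge> 0\<close> by (simp add: emeasure_eq_measure2 ennreal_plus add_left_mono)
  finally have "rho_sq s u g \<le> ennreal (2 * (a + lam / p * (measure lebesgue S + C) + C / q))"
    using rho_sq_le_of_I_fun_le[OF I _ _ _ Lq] exps \<open>C \<ge> 0\<close> by simp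
  also have "\<dots> \<le> ennreal (2 * (a + lam / p * (measure lebesgue S + C) + C / p))"
    using \<open>C \<ge> 0\<close> \<open>0 < p\<close> \<open>p \<le> q\<close>
    by (intro ennreal_leI mult_left_mono add_left_mono divide_left_mono) auto
  finally show ?thesis .
qed

lemma rho_le_of_rho_sq_le:
  assumes "rho_sq s u g \<le> ennreal K" "0 \<le> K"
  shows "rho s u g \<le> ennreal (sqrt K)"
proof -
  have finite: "rho_sq s u g \<noteq> \<infinity>" using assms(1) by (auto simp: top_unique)
  have "enn2real (rho_sq s u g) \<le> K" using assms by (intro enn2real_leI)
  then show ?thesis
    unfolding rho_def enn_powr_def using finite by (simp add: powr_half_sqrt ennreal_leI)
qed

theorem lemma3p3:
  fixes \<Omega> :: "'a::euclidean_space set" and s p lam :: real and pn :: "nat \<Rightarrow> real"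
  assumes N3: "DIM('a) \<ge> 3"
    and s: "0 < s" "s < 1" "DIM('a) = 3 \<longrightarrow> s > 1/2"
    and p_high: "real DIM('a) > 6 - 4 * s \<longrightarrow>
                   2 + 4 * s / (real DIM('a) - 2) < p \<and> p < crit_exp DIM('a)"
    and p_low: "real DIM('a) \<le> 6 - 4 * s \<longrightarrow>
                   crit_exp DIM('a) - 1 < p \<and> p < crit_exp DIM('a)"
    and \<Omega>: "bounded \<Omega>" "open \<Omega>" "\<exists>\<alpha>. C1alpha_boundary \<alpha> \<Omega>"
    and pn: "\<And>n. p < pn n \<and> pn n < crit_exp DIM('a)" "pn \<longlonglongrightarrow> crit_exp DIM('a)"
    and lam: "lam > 0"
  shows "\<forall>\<alpha>1>0. \<forall>\<alpha>2>0. \<exists>\<alpha>3>0. \<forall>n u g.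
           X0 \<Omega> u \<longrightarrow> weak_grad_on UNIV u g \<longrightarrow>
           I_fun s p (pn n) lam u g \<le> ereal \<alpha>1 \<longrightarrow>
           Lnorm (pn n) u \<le> ennreal \<alpha>2 \<longrightarrow>
           rho s u g \<le> ennreal \<alpha>3"
proof (intro allI impI)
  fix a1 a2 :: real assume "a1 > 0" "a2 > 0"
  have "p > 0"
  proof (cases "real DIM('a) > 6 - 4 * s")
    case True
    moreover have "4 * s / (real DIM('a) - 2) \<ge> 0" using N3 s by simp
    ultimately show ?thesis using p_high by linarith
  next
    case False
    then show ?thesis using p_low crit_exp_gt_two[OF N3] by linarith
  qed
  have \<Omega>_lmeasurable: "\<Omega> \<in> lmeasurable"
    using \<Omega> by (intro bounded_set_imp_lmeasurable) auto
  define C where "C = max 1 a2 powr crit_exp DIM('a)"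
  define K where "K = 2 * (a1 + lam / p * (measure lebesgue \<Omega> + C) + C / p)"
  have "K > 0"
    unfolding K_def C_def using \<open>a1 > 0\<close> \<open>p > 0\<close> lam by (simp add: add_pos_nonneg)
  show "\<exists>\<alpha>3>0. \<forall>n u g. X0 \<Omega> u \<longrightarrow> weak_grad_on UNIV u g \<longrightarrow>
           I_fun s p (pn n) lam u g \<le> ereal a1 \<longrightarrow> Lnorm (pn n) u \<le> ennreal a2 \<longrightarrow>
           rho s u g \<le> ennreal \<alpha>3"
  proof (intro exI[of _ "sqrt K"] conjI allI impI)
    show "sqrt K > 0" using \<open>K > 0\<close> by simp
    fix n u g
    assume "X0 \<Omega> u" "weak_grad_on UNIV u g"
      "I_fun s p (pn n) lam u g \<le> ereal a1" "Lnorm (pn n) u \<le> ennreal a2"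
    then have "rho_sq s u g \<le> ennreal K"
      unfolding K_def C_def using \<Omega>_lmeasurable pn(1)[of n] lam \<open>p > 0\<close> \<open>a2 > 0\<close>
      by (intro rho_sq_le_of_I_fun_le_of_Lnorm_le) (auto simp: weak_grad_on_def X0_def)
    then show "rho s u g \<le> ennreal (sqrt K)"
      by (rule rho_le_of_rho_sq_le) (use \<open>K > 0\<close> in simp)
  qed
qed

end
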